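(* Consider an instance of the bicriteria asymmetric traveling salesman problem (bi-ATSP) with tour set $\mathcal{C}$, vector criterion $D=(D_1,D_2)$, outcome set $\mathcal{D}=D(\mathcal{C})$, and $\mathcal{D}_i=D_i(\mathcal{C})$ for $i=1,2$. Suppose that $$P(\mathcal{D}) = \{ (y_1, y_2): y_2 = a - k y_1,\ y_1 \in \mathcal{D}_1,\ y_2 \in \mathcal{D}_2 \},$$ where $a>0$ and $k>0$ are constants. Suppose the 1st criterion $D_1$ is more important than the 2nd criterion $D_2$ with coefficient of relative importance $\theta'\in(0,1)$, and let $\hat{P}(\mathcal{D})$ be the corresponding reduced Pareto set (reduction with $i=1$, $j=2$, $\theta=\theta'$). If $\theta' \geqslant k/(k+1)$, then $\hat{P}(\mathcal{D})$ consists of exactly one element. If $\theta' < k/(k+1)$, then $\hat{P}(\mathcal{D}) = P(\mathcal{D})$.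
   Context: Bi-ATSP: given a complete directed graph $G=(V,E)$ on $n$ vertices, each arc $e\in E$ carries a weight vector $d(e)=(d_1(e),d_2(e))$ of positive numbers. $\mathcal{C}$ is the set of all $(n-1)!$ Hamiltonian circuits (tours) of $G$, and for a tour $C$, $D(C)=(D_1(C),D_2(C))$ with $D_j(C)=\sum_{e\in C} d_j(e)$. For vectors $y^*,y$, write $y^*\leq y$ if $y^*\neq y$ and $y^*_s\leqslant y_s$ for every coordinate $s$ (Pareto relation). For a vector criterion $F$ on $\mathcal{C}$, the set of pareto-optimal tours is $P_F(\mathcal{C})=\{C\in\mathcal{C}: \nexists C^*\in\mathcal{C},\ F(C^* )\leq F(C)\}$. The Pareto set is $P(\mathcal{D})=\{y\in\mathcal{D}: \nexists y^*\in\mathcal{D},\ y^*\leq y\}$. Reduced Pareto set: if criterion $D_i$ is declared more important than criterion $D_j$ ($\{i,j\}=\{1,2\}$) with coefficient of relative importance $\theta\in(0,1)$, define the new criterion $\hat D$ by $\hat D_j=\theta D_i+(1-\theta)D_j$ and $\hat D_i=D_i$, and set $\hat{P}(\mathcal{D})=D(P_{\hat D}(\mathcal{C}))$ (a subset of $P(\mathcal{D})$). *)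

theory Defs
  imports Complex_Main
begin

text \<open>Vertices of the complete directed graph on n vertices: 0..<n.
  Arcs: pairs (i,j) of distinct vertices.\<close>

definition tours :: "nat \<Rightarrow> (nat \<times> nat) set set" where
  "tours n = { {(v i, v ((i + 1) mod n)) | i. i < n} | v. bij_betw v {0..<n} {0..<n} }"

definition Dvec :: "(nat \<Rightarrow> nat \<Rightarrow> real) \<Rightarrow> (nat \<Rightarrow> nat \<Rightarrow> real)
    \<Rightarrow> (nat \<times> nat) set \<Rightarrow> real \<times> real" where
  "Dvec d1 d2 C = ((\<Sum>(i,j)\<in>C. d1 i j), (\<Sum>(i,j)\<in>C. d2 i j))"

definition pareto_le :: "real \<times> real \<Rightarrow> real \<times> real \<Rightarrow> bool" where
  "pareto_le ys y \<longleftrightarrow> ys \<noteq> y \<and> fst ys \<le> fst y \<and> snd ys \<le> snd y"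

definition pareto_set :: "(real \<times> real) set \<Rightarrow> (real \<times> real) set" where
  "pareto_set Y = {y \<in> Y. \<not> (\<exists>ys\<in>Y. pareto_le ys y)}"

definition pareto_opt :: "('c \<Rightarrow> real \<times> real) \<Rightarrow> 'c set \<Rightarrow> 'c set" where
  "pareto_opt F Cs = {C \<in> Cs. \<not> (\<exists>Cs'\<in>Cs. pareto_le (F Cs') (F C))}"

text \<open>Criterion D_1 more important than D_2 with coefficient theta:
  hat D_1 = D_1, hat D_2 = theta D_1 + (1 - theta) D_2.\<close>
definition reduce12 :: "real \<Rightarrow> ('c \<Rightarrow> real \<times> real) \<Rightarrow> 'c \<Rightarrow> real \<times> real" where
  "reduce12 \<theta> F C = (fst (F C), \<theta> * fst (F C) + (1 - \<theta>) * snd (F C))"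

definition reduced_pareto12 :: "real \<Rightarrow> ('c \<Rightarrow> real \<times> real) \<Rightarrow> 'c set \<Rightarrow> (real \<times> real) set" where
  "reduced_pareto12 \<theta> F Cs = F ` pareto_opt (reduce12 \<theta> F) Cs"

end

theory Submission
  imports Defs
begin

text \<open>The reduction replaces the outcome y of a tour by its image under the linear map
  y \<mapsto> (y1, \<theta> y1 + (1 - \<theta>) y2), which is strictly monotone for the Pareto relation.
  Hence, for a finite outcome set, the reduced Pareto set is the Pareto set of the images of
  the Pareto points alone. On the line y2 = a - k y1 this map sends y to
  (y1, (1 - \<theta>) a + (\<theta> - (1 - \<theta>) k) y1). If \<theta> \<ge> k/(k+1) the slope is nonnegative, so the
  point with least y1 dominates all others; otherwise the slope is negative and the images
  stay mutually incomparable.\<close>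

definition reduce_vec :: "real \<Rightarrow> real \<times> real \<Rightarrow> real \<times> real" where
  "reduce_vec \<theta> y = (fst y, \<theta> * fst y + (1 - \<theta>) * snd y)"

definition reduced_pareto_set :: "real \<Rightarrow> (real \<times> real) set \<Rightarrow> (real \<times> real) set" where
  "reduced_pareto_set \<theta> Y =
     {y \<in> Y. \<not> (\<exists>z\<in>Y. pareto_le (reduce_vec \<theta> z) (reduce_vec \<theta> y))}"

lemma pareto_le_trans: "pareto_le x y \<Longrightarrow> pareto_le y z \<Longrightarrow> pareto_le x z"
  by (auto simp: pareto_le_def prod_eq_iff)

lemma pareto_le_reduce_vec:
  assumes "0 \<le> \<theta>" "\<theta> < 1" "pareto_le z y"
  shows "pareto_le (reduce_vec \<theta> z) (reduce_vec \<theta> y)"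
proof -
  have le: "fst z \<le> fst y" "snd z \<le> snd y" and ne: "z \<noteq> y"
    using assms(3) by (auto simp: pareto_le_def)
  have "\<theta> * fst z + (1 - \<theta>) * snd z \<le> \<theta> * fst y + (1 - \<theta>) * snd y"
    using le assms(1,2) by (intro add_mono mult_left_mono) auto
  moreover have "reduce_vec \<theta> z \<noteq> reduce_vec \<theta> y"
    using ne assms(2) by (auto simp: reduce_vec_def prod_eq_iff)
  ultimately show ?thesis
    using le by (simp add: pareto_le_def reduce_vec_def)
qed

lemma pareto_set_subset: "pareto_set Y \<subseteq> Y"
  by (auto simp: pareto_set_def)

lemma finite_obtain_argmin:
  fixes f :: "'a \<Rightarrow> 'b::linorder"
  assumes "finite S" "S \<noteq> {}"
  obtains x where "x \<in> S" "\<And>y. y \<in> S \<Longrightarrow> f x \<le> f y"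
proof -
  have "Min (f ` S) \<in> f ` S" using assms by simp
  then obtain x where "x \<in> S" "f x = Min (f ` S)" by auto
  then show ?thesis using assms(1) by (intro that) auto
qed

text \<open>A Pareto point minimising y1 + y2 below y dominates y.\<close>
lemma finite_pareto_set_dominates:
  assumes "finite Y" "y \<in> Y"
  obtains p where "p \<in> pareto_set Y" "p = y \<or> pareto_le p y"
proof -
  define S where "S = {z\<in>Y. fst z \<le> fst y \<and> snd z \<le> snd y}"
  have "finite S" using assms(1) by (simp add: S_def)
  moreover have "S \<noteq> {}" using assms(2) unfolding S_def by blast
  ultimately obtain p where pS: "p \<in> S" and p_min: "\<And>z. z \<in> S \<Longrightarrow> fst p + snd p \<le> fst z + snd z"
    by (rule finite_obtain_argmin[of S "\<lambda>z. fst z + snd z"]) blast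
  have "p \<in> pareto_set Y"
  proof (rule ccontr)
    assume "p \<notin> pareto_set Y"
    then obtain q where "q \<in> Y" "pareto_le q p" using pS by (auto simp: pareto_set_def S_def)
    moreover from this have "q \<in> S" using pS by (auto simp: S_def pareto_le_def)
    ultimately show False
      using p_min[of q] by (auto simp: pareto_le_def prod_eq_iff)
  qed
  moreover have "p = y \<or> pareto_le p y" using pS by (auto simp: S_def pareto_le_def)
  ultimately show ?thesis by (rule that)
qed

lemma reduced_pareto12_eq_reduced_pareto_set:
  "reduced_pareto12 \<theta> F Cs = reduced_pareto_set \<theta> (F ` Cs)"
  by (auto simp: reduced_pareto12_def pareto_opt_def reduced_pareto_set_def reduce12_def reduce_vec_def)

lemma reduced_pareto_set_eq_of_pareto_set:
  assumes "finite Y" "0 \<le> \<theta>" "\<theta> < 1"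
  shows "reduced_pareto_set \<theta> Y = reduced_pareto_set \<theta> (pareto_set Y)"
proof
  show "reduced_pareto_set \<theta> Y \<subseteq> reduced_pareto_set \<theta> (pareto_set Y)"
    using pareto_le_reduce_vec[OF assms(2,3)] pareto_set_subset[of Y]
    by (fastforce simp: reduced_pareto_set_def pareto_set_def)
  show "reduced_pareto_set \<theta> (pareto_set Y) \<subseteq> reduced_pareto_set \<theta> Y"
  proof
    fix y assume y: "y \<in> reduced_pareto_set \<theta> (pareto_set Y)"
    have "\<not> pareto_le (reduce_vec \<theta> z) (reduce_vec \<theta> y)" if "z \<in> Y" for z
    proof
      assume zy: "pareto_le (reduce_vec \<theta> z) (reduce_vec \<theta> y)"
      obtain p where p: "p \<in> pareto_set Y" "p = z \<or> pareto_le p z"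
        using finite_pareto_set_dominates[OF assms(1) \<open>z \<in> Y\<close>] .
      then have "pareto_le (reduce_vec \<theta> p) (reduce_vec \<theta> y)"
        using zy pareto_le_reduce_vec[OF assms(2,3), of p z] pareto_le_trans by blast
      with p(1) y show False
        by (auto simp: reduced_pareto_set_def)
    qed
    then show "y \<in> reduced_pareto_set \<theta> Y"
      using y pareto_set_subset[of Y] by (auto simp: reduced_pareto_set_def)
  qed
qed

lemma snd_reduce_vec_on_line:
  assumes "snd y = a - k * fst y"
  shows "snd (reduce_vec \<theta> y) = (1 - \<theta>) * a + (\<theta> - (1 - \<theta>) * k) * fst y"
proof -
  have "snd (reduce_vec \<theta> y) = \<theta> * fst y + (1 - \<theta>) * (a - k * fst y)"
    using assms by (simp add: reduce_vec_def)
  then show ?thesis by (simp add: algebra_simps)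
qed

lemma on_line_eqI:
  "snd p = a - k * fst p \<Longrightarrow> snd y = a - k * fst y \<Longrightarrow> fst p = fst y \<Longrightarrow> p = y"
  by (simp add: prod_eq_iff)

lemma reduced_pareto_set_on_line_singleton:
  fixes P :: "(real \<times> real) set"
  assumes "finite P" "P \<noteq> {}" "0 \<le> k" "k / (k + 1) \<le> \<theta>"
    and line: "\<And>y. y \<in> P \<Longrightarrow> snd y = a - k * fst y"
  shows "\<exists>y. reduced_pareto_set \<theta> P = {y}"
proof -
  have slope: "0 \<le> \<theta> - (1 - \<theta>) * k"
    using assms(3,4) by (simp add: field_simps)
  obtain y0 where y0: "y0 \<in> P" and y0_min: "\<And>y. y \<in> P \<Longrightarrow> fst y0 \<le> fst y"
    by (rule finite_obtain_argmin[OF assms(1,2), of fst]) blast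
  have less: "fst y0 < fst y" if "y \<in> P" "y \<noteq> y0" for y
  proof -
    have "fst y0 \<noteq> fst y"
      using on_line_eqI[OF line[OF y0] line[OF that(1)]] that(2) by blast
    then show ?thesis using y0_min[OF that(1)] by simp
  qed
  have "\<not> pareto_le (reduce_vec \<theta> z) (reduce_vec \<theta> y0)" if "z \<in> P" for z
  proof
    assume zy0: "pareto_le (reduce_vec \<theta> z) (reduce_vec \<theta> y0)"
    then have "z \<noteq> y0" "fst z \<le> fst y0"
      by (auto simp: pareto_le_def reduce_vec_def)
    with less[OF that] show False by simp
  qed
  with y0 have "y0 \<in> reduced_pareto_set \<theta> P"
    by (simp add: reduced_pareto_set_def)
  moreover have "y = y0" if "y \<in> reduced_pareto_set \<theta> P" for y
  proof (rule ccontr)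
    assume "y \<noteq> y0"
    moreover have "y \<in> P" using that by (simp add: reduced_pareto_set_def)
    ultimately have "fst y0 < fst y" by (rule less[rotated])
    then have "snd (reduce_vec \<theta> y0) \<le> snd (reduce_vec \<theta> y)"
      using slope snd_reduce_vec_on_line[OF line[OF y0]] snd_reduce_vec_on_line[OF line[OF \<open>y \<in> P\<close>]]
      by (simp add: mult_left_mono)
    with \<open>fst y0 < fst y\<close> have "pareto_le (reduce_vec \<theta> y0) (reduce_vec \<theta> y)"
      by (simp add: pareto_le_def reduce_vec_def prod_eq_iff)
    with that y0 show False by (auto simp: reduced_pareto_set_def)
  qed
  ultimately show ?thesis by blast
qed

lemma reduced_pareto_set_on_line_eq:
  fixes P :: "(real \<times> real) set"
  assumes "0 \<le> k" "\<theta> < k / (k + 1)"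
    and line: "\<And>y. y \<in> P \<Longrightarrow> snd y = a - k * fst y"
  shows "reduced_pareto_set \<theta> P = P"
proof -
  have slope: "\<theta> - (1 - \<theta>) * k < 0"
    using assms(1,2) by (simp add: field_simps)
  have "\<not> pareto_le (reduce_vec \<theta> p) (reduce_vec \<theta> y)" if "p \<in> P" "y \<in> P" for p y
  proof
    assume py: "pareto_le (reduce_vec \<theta> p) (reduce_vec \<theta> y)"
    then have le: "fst p \<le> fst y" "snd (reduce_vec \<theta> p) \<le> snd (reduce_vec \<theta> y)"
      by (auto simp: pareto_le_def reduce_vec_def)
    have "fst p \<noteq> fst y"
      using py on_line_eqI[OF line[OF that(1)] line[OF that(2)]] by (auto simp: pareto_le_def)
    with le(1) have "fst p < fst y" by simp
    then have "(\<theta> - (1 - \<theta>) * k) * fst y < (\<theta> - (1 - \<theta>) * k) * fst p"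
      using slope by (simp add: mult_strict_left_mono_neg)
    with le(2) show False
      using snd_reduce_vec_on_line[OF line[OF that(1)]] snd_reduce_vec_on_line[OF line[OF that(2)]]
      by simp
  qed
  then show ?thesis by (auto simp: reduced_pareto_set_def)
qed

lemma finite_tours: "finite (tours n)"
proof (rule finite_subset)
  show "tours n \<subseteq> Pow ({0..<n} \<times> {0..<n})"
    by (auto simp: tours_def bij_betw_def)
qed simp

lemma tours_nonempty: "tours n \<noteq> {}"
  using bij_betw_id[of "{0..<n}"] unfolding tours_def by blast

theorem theorem2:
  fixes n :: nat and d1 d2 :: "nat \<Rightarrow> nat \<Rightarrow> real" and a k \<theta> :: real
  assumes "n \<ge> 2"
    and "\<forall>i j. i < n \<longrightarrow> j < n \<longrightarrow> i \<noteq> j \<longrightarrow> d1 i j > 0 \<and> d2 i j > 0"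
    and "a > 0" and "k > 0"
    and "0 < \<theta>" and "\<theta> < 1"
    and "pareto_set (Dvec d1 d2 ` tours n) =
           {(y1, y2). y2 = a - k * y1 \<and> y1 \<in> (\<lambda>C. fst (Dvec d1 d2 C)) ` tours n
                      \<and> y2 \<in> (\<lambda>C. snd (Dvec d1 d2 C)) ` tours n}"
  shows "(\<theta> \<ge> k / (k + 1) \<longrightarrow> (\<exists>y. reduced_pareto12 \<theta> (Dvec d1 d2) (tours n) = {y}))
       \<and> (\<theta> < k / (k + 1) \<longrightarrow>
            reduced_pareto12 \<theta> (Dvec d1 d2) (tours n) = pareto_set (Dvec d1 d2 ` tours n))"
proof -
  define Y where "Y = Dvec d1 d2 ` tours n"
  have Y: "finite Y" "Y \<noteq> {}"
    using finite_tours tours_nonempty by (auto simp: Y_def)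
  have reduced: "reduced_pareto12 \<theta> (Dvec d1 d2) (tours n) = reduced_pareto_set \<theta> (pareto_set Y)"
    using reduced_pareto_set_eq_of_pareto_set[OF Y(1)] assms(5,6)
    by (simp add: reduced_pareto12_eq_reduced_pareto_set Y_def)
  have line: "\<And>y. y \<in> pareto_set Y \<Longrightarrow> snd y = a - k * fst y"
    using assms(7) by (auto simp: Y_def)
  have "finite (pareto_set Y)" "pareto_set Y \<noteq> {}"
    using Y finite_pareto_set_dominates[OF Y(1)] finite_subset[OF pareto_set_subset] by blast+
  then show ?thesis
    using reduced_pareto_set_on_line_singleton[OF _ _ _ _ line] reduced_pareto_set_on_line_eq[OF _ _ line]
      assms(4) unfolding reduced Y_def[symmetric] by auto
qed

end
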